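(* With $\alpha_f(\sigma):=\sup_{\omega\in\mathbb{R}} f(\sigma+j\omega)$ for $\sigma>\alpha_0$, one has $\lim_{\sigma\to\alpha_0^+}\alpha_f(\sigma)=+\infty$ and $\lim_{\sigma\to+\infty}\alpha_f(\sigma)=0$.
   Context: Fix integers $n\ge 1$, $m\ge 0$, matrices $A_0,\dots,A_m\in\mathbb{C}^{n\times n}$, delays $\tau_0=0$ and $\tau_1,\dots,\tau_m\ge 0$, and weights $w_0,\dots,w_m>0$. Define the matrix function $F(\lambda)=\lambda I_n-\sum_{i=0}^m A_i e^{-\lambda\tau_i}$ for $\lambda\in\mathbb{C}$. The characteristic roots are the solutions of $\det F(\lambda)=0$; this set is nonempty, and every right half-plane $\{\Re\lambda\ge c\}$ contains only finitely many of them, so the spectral abscissa $\alpha_0=\sup\{\Re\lambda:\det F(\lambda)=0\}$ is a finite real number attained by some root. Define $w(\lambda)=\sum_{i=0}^m |e^{-\lambda\tau_i}|/w_i$ and, for $\lambda$ not a characteristic root, $f(\lambda)=w(\lambda)\,\sigma_{\max}(F(\lambda)^{-1})$, where $\sigma_{\max}$ denotes the largest singular value. *)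

theory Defs
  imports "HOL-Analysis.Analysis"
begin

text \<open>Characteristic matrix F(lambda) = lambda I - sum_{i=0}^m A_i exp(-lambda tau_i).
  Matrices are complex^'n^'n, the dimension n = CARD('n) is arbitrary (n >= 1 automatically).\<close>
definition charF :: "nat \<Rightarrow> (nat \<Rightarrow> complex^'n^'n) \<Rightarrow> (nat \<Rightarrow> real) \<Rightarrow> complex \<Rightarrow> complex^'n^'n" where
  "charF m A tau lam =
     mat lam - (\<Sum>k\<in>{..m}. (\<chi> i j. exp (- lam * complex_of_real (tau k)) * A k $ i $ j))"

text \<open>Largest singular value = operator norm induced by the Euclidean norm.\<close>
definition sigma_max :: "complex^'n^'n \<Rightarrow> real" where
  "sigma_max M = onorm (\<lambda>x. M *v x)"

definition weightfun :: "nat \<Rightarrow> (nat \<Rightarrow> real) \<Rightarrow> (nat \<Rightarrow> real) \<Rightarrow> complex \<Rightarrow> real" where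
  "weightfun m tau wt lam = (\<Sum>k\<in>{..m}. cmod (exp (- lam * complex_of_real (tau k))) / wt k)"

definition ffun :: "nat \<Rightarrow> (nat \<Rightarrow> complex^'n^'n) \<Rightarrow> (nat \<Rightarrow> real) \<Rightarrow> (nat \<Rightarrow> real) \<Rightarrow> complex \<Rightarrow> real" where
  "ffun m A tau wt lam = weightfun m tau wt lam * sigma_max (matrix_inv (charF m A tau lam))"

definition spectral_abscissa :: "nat \<Rightarrow> (nat \<Rightarrow> complex^'n^'n) \<Rightarrow> (nat \<Rightarrow> real) \<Rightarrow> real" where
  "spectral_abscissa m A tau = Sup (Re ` {lam. det (charF m A tau lam) = 0})"

definition alpha_f :: "nat \<Rightarrow> (nat \<Rightarrow> complex^'n^'n) \<Rightarrow> (nat \<Rightarrow> real) \<Rightarrow> (nat \<Rightarrow> real) \<Rightarrow> real \<Rightarrow> ereal" where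
  "alpha_f m A tau wt \<sigma> = (SUP \<omega>::real. ereal (ffun m A tau wt (Complex \<sigma> \<omega>)))"

end

theory Submission
  imports Defs "HOL-Complex_Analysis.Conformal_Mappings"
begin

(* Let S be the sum of the entrywise l1-norms of the A_i. For Re s > S the delay terms of F(s)
  are bounded by S, so sigma_max(F(s)^-1) <= 1/(Re s - S), while w stays bounded; hence
  alpha_f(sigma) = O(1/sigma). Conversely, if F(z0) v = 0 then F(z0 + d) v = O(d) v, so
  sigma_max(F(z0 + d)^-1) >= c/d; since w >= 1/w_0, roots z0 with Re z0 close to alpha_0 give
  alpha_f(sigma) >= c'/(sigma - alpha_0).
  The second argument needs roots to exist: det F is entire of exponential type, so without zeros
  it would be exp(a z + b) (Borel-Caratheodory and Liouville), which cannot grow like x^n along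
  the positive real axis. *)

section \<open>Matrix norms\<close>

definition matrix_l1_norm :: "complex^'n^'m \<Rightarrow> real" where
  "matrix_l1_norm M = (\<Sum>i\<in>UNIV. \<Sum>j\<in>UNIV. cmod (M$i$j))"

lemma matrix_l1_norm_nonneg: "matrix_l1_norm M \<ge> 0"
  unfolding matrix_l1_norm_def by (intro sum_nonneg) auto

lemma norm_entry_le_matrix_l1_norm: "cmod (M$i$j) \<le> matrix_l1_norm M"
proof -
  have "cmod (M$i$j) \<le> (\<Sum>j\<in>UNIV. cmod (M$i$j))"
    by (rule member_le_sum) auto
  also have "\<dots> \<le> matrix_l1_norm M"
    unfolding matrix_l1_norm_def
    by (rule member_le_sum[where f="\<lambda>i. \<Sum>j\<in>UNIV. cmod (M$i$j)"]) (auto intro: sum_nonneg)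
  finally show ?thesis .
qed

lemma norm_matrix_vector_mult_le_l1: "norm (M *v x) \<le> matrix_l1_norm M * norm x"
proof -
  have "norm (M *v x) \<le> (\<Sum>i\<in>UNIV. cmod ((M *v x)$i))"
    unfolding norm_vec_def by (rule L2_set_le_sum) auto
  also have "\<dots> \<le> (\<Sum>i\<in>UNIV. \<Sum>j\<in>UNIV. cmod (M$i$j) * norm x)"
  proof (rule sum_mono)
    fix i
    have "cmod ((M *v x)$i) \<le> (\<Sum>j\<in>UNIV. cmod (M$i$j * x$j))"
      unfolding matrix_vector_mult_def by (simp add: norm_sum)
    also have "\<dots> \<le> (\<Sum>j\<in>UNIV. cmod (M$i$j) * norm x)"
      by (intro sum_mono) (simp add: norm_mult mult_left_mono Finite_Cartesian_Product.norm_nth_le)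
    finally show "cmod ((M *v x)$i) \<le> (\<Sum>j\<in>UNIV. cmod (M$i$j) * norm x)" .
  qed
  also have "\<dots> = matrix_l1_norm M * norm x"
    by (simp add: matrix_l1_norm_def sum_distrib_right)
  finally show ?thesis .
qed

lemma norm_vector_scalar_mult: "norm ((c::'a::real_normed_div_algebra) *s (v::'a^'n)) = norm c * norm v"
  unfolding norm_vec_def by (simp add: norm_mult L2_set_right_distrib)

lemma sigma_max_nonneg: "sigma_max M \<ge> 0"
  unfolding sigma_max_def by (rule onorm_pos_le) simp

lemma norm_matrix_vector_mult_le_sigma_max: "norm (M *v x) \<le> sigma_max M * norm x"
  unfolding sigma_max_def by (rule onorm) simp

lemma sigma_max_le:
  assumes "\<And>x. norm (M *v x) \<le> b * norm x"
  shows "sigma_max M \<le> b"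
  unfolding sigma_max_def by (rule onorm_le) (fact assms)

lemma det_eq_0_imp_kernel:
  fixes M :: "complex^'n^'n"
  assumes "det M = 0"
  obtains v where "v \<noteq> 0" "M *v v = 0"
proof -
  have "\<not> invertible M" using assms invertible_det_nz by blast
  then show ?thesis
    using that invertible_left_inverse matrix_left_invertible_ker by blast
qed

lemma matrix_inv_mult_vec:
  fixes M :: "complex^'n^'n"
  assumes "det M \<noteq> 0"
  shows "M *v (matrix_inv M *v y) = y" "matrix_inv M *v (M *v y) = y"
proof -
  have "\<exists>M'. M ** M' = mat 1 \<and> M' ** M = mat 1"
    using assms invertible_det_nz unfolding invertible_def by blast
  then have "M ** matrix_inv M = mat 1 \<and> matrix_inv M ** M = mat 1"
    unfolding matrix_inv_def by (rule someI_ex)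
  then show "M *v (matrix_inv M *v y) = y" "matrix_inv M *v (M *v y) = y"
    by (simp_all add: matrix_vector_mul_assoc)
qed

section \<open>Resolvent bounds for the characteristic matrix\<close>

definition delay_coeff_norm :: "nat \<Rightarrow> (nat \<Rightarrow> complex^'n^'n) \<Rightarrow> real" where
  "delay_coeff_norm m A = (\<Sum>k\<le>m. matrix_l1_norm (A k))"

lemma delay_coeff_norm_nonneg: "delay_coeff_norm m A \<ge> 0"
  unfolding delay_coeff_norm_def by (intro sum_nonneg matrix_l1_norm_nonneg)

lemma norm_exp_delay_le_1:
  assumes "t \<ge> 0" "Re z \<ge> 0"
  shows "cmod (exp (- z * complex_of_real t)) \<le> 1"
  using assms by (simp add: mult_nonneg_nonneg)

lemma charF_entry:
  "charF m A tau z $ i $ j = of_bool (i = j) * z - (\<Sum>k\<le>m. exp (- z * complex_of_real (tau k)) * A k $ i $ j)"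
  by (simp add: charF_def mat_def)

lemma charF_mult_vec:
  "charF m A tau z *v x = z *s x - (\<Sum>k\<le>m. exp (- z * complex_of_real (tau k)) *s (A k *v x))"
  by (simp add: vec_eq_iff charF_entry matrix_vector_mult_def sum_subtractf left_diff_distrib
      sum_distrib_left sum_distrib_right mult.assoc of_bool_def if_distrib[of "\<lambda>u. u * _"] cong: if_cong)
     (subst sum.swap, simp)

lemma norm_delay_sum_le:
  "norm (\<Sum>k\<le>m. c k *s (A k *v x)) \<le> (\<Sum>k\<le>m. cmod (c k) * matrix_l1_norm (A k)) * norm x"
proof -
  have "norm (\<Sum>k\<le>m. c k *s (A k *v x)) \<le> (\<Sum>k\<le>m. norm (c k *s (A k *v x)))"
    by (rule norm_sum)
  also have "\<dots> \<le> (\<Sum>k\<le>m. cmod (c k) * matrix_l1_norm (A k) * norm x)"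
    by (intro sum_mono)
       (simp add: norm_vector_scalar_mult mult.assoc mult_left_mono norm_matrix_vector_mult_le_l1)
  finally show ?thesis by (simp add: sum_distrib_right)
qed

lemma norm_charF_mult_vec_ge:
  assumes "\<forall>i\<le>m. tau i \<ge> 0" "Re z \<ge> 0"
  shows "(cmod z - delay_coeff_norm m A) * norm x \<le> norm (charF m A tau z *v x)"
proof -
  let ?B = "\<Sum>k\<le>m. exp (- z * complex_of_real (tau k)) *s (A k *v x)"
  have "norm ?B \<le> (\<Sum>k\<le>m. cmod (exp (- z * complex_of_real (tau k))) * matrix_l1_norm (A k)) * norm x"
    by (rule norm_delay_sum_le)
  also have "\<dots> \<le> delay_coeff_norm m A * norm x"
    unfolding delay_coeff_norm_def
    using assms norm_exp_delay_le_1
    by (intro mult_right_mono sum_mono mult_left_le_one_le matrix_l1_norm_nonneg) auto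
  finally have "norm ?B \<le> delay_coeff_norm m A * norm x" .
  moreover have "cmod z * norm x \<le> norm (charF m A tau z *v x) + norm ?B"
    unfolding charF_mult_vec norm_vector_scalar_mult[symmetric]
    using norm_triangle_ineq2[of "z *s x" ?B] by linarith
  ultimately show ?thesis by (simp add: left_diff_distrib)
qed

lemma Re_root_le_delay_coeff_norm:
  assumes "\<forall>i\<le>m. tau i \<ge> 0" "det (charF m A tau z) = 0"
  shows "Re z \<le> delay_coeff_norm m A"
proof (rule ccontr)
  assume "\<not> ?thesis"
  then have gt: "cmod z - delay_coeff_norm m A > 0" "Re z \<ge> 0"
    using abs_Re_le_cmod[of z] delay_coeff_norm_nonneg[of m A] by linarith+
  obtain v where "v \<noteq> 0" "charF m A tau z *v v = 0"
    using det_eq_0_imp_kernel assms(2) by blast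
  with norm_charF_mult_vec_ge[OF assms(1) gt(2), of A v] gt(1) show False
    by (simp add: mult_le_0_iff)
qed

lemma sigma_max_inv_charF_le:
  assumes "\<forall>i\<le>m. tau i \<ge> 0" "Re z > delay_coeff_norm m A"
  shows "sigma_max (matrix_inv (charF m A tau z)) \<le> 1 / (Re z - delay_coeff_norm m A)"
proof (rule sigma_max_le)
  fix y
  let ?S = "delay_coeff_norm m A" and ?x = "matrix_inv (charF m A tau z) *v y"
  have "det (charF m A tau z) \<noteq> 0"
    using Re_root_le_delay_coeff_norm[OF assms(1)] assms(2) by force
  then have "(cmod z - ?S) * norm ?x \<le> norm y"
    using norm_charF_mult_vec_ge[OF assms(1), of z A ?x] assms(2) delay_coeff_norm_nonneg[of m A]
    by (simp add: matrix_inv_mult_vec)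
  moreover have "(Re z - ?S) * norm ?x \<le> (cmod z - ?S) * norm ?x"
    using complex_Re_le_cmod[of z] by (intro mult_right_mono) auto
  ultimately show "norm ?x \<le> 1 / (Re z - ?S) * norm y"
    using assms(2) by (simp add: field_simps)
qed

lemma norm_exp_delay_shift_le:
  assumes "t \<ge> 0" "d \<ge> 0"
  shows "cmod (exp (- (z + complex_of_real d) * complex_of_real t) - exp (- z * complex_of_real t))
         \<le> t * exp (- Re z * t) * d"
proof -
  have "exp (- (z + complex_of_real d) * complex_of_real t) - exp (- z * complex_of_real t)
      = exp (- z * complex_of_real t) * complex_of_real (exp (- d * t) - 1)"
    by (simp add: algebra_simps exp_diff exp_minus divide_inverse flip: exp_of_real)
  then have "cmod (exp (- (z + complex_of_real d) * complex_of_real t) - exp (- z * complex_of_real t))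
      = exp (- Re z * t) * \<bar>exp (- d * t) - 1\<bar>"
    by (simp only: norm_mult norm_of_real norm_exp_eq_Re) simp
  also have "\<bar>exp (- d * t) - 1\<bar> = 1 - exp (- d * t)"
    using assms by (simp add: mult_nonneg_nonneg)
  also have "\<dots> \<le> d * t"
    using exp_ge_add_one_self[of "- d * t"] by simp
  finally show ?thesis by (simp add: mult_left_mono mult_ac)
qed

(* For d \<ge> 0, |F(z + d) v - F(z) v| \<le> d * charF_lipschitz_const m A tau (- Re z) * |v|;
  the summand 1 comes from the term \<lambda> I of F. *)
definition charF_lipschitz_const ::
    "nat \<Rightarrow> (nat \<Rightarrow> complex^'n^'n) \<Rightarrow> (nat \<Rightarrow> real) \<Rightarrow> real \<Rightarrow> real" where
  "charF_lipschitz_const m A tau r = 1 + (\<Sum>k\<le>m. tau k * exp (r * tau k) * matrix_l1_norm (A k))"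

lemma charF_lipschitz_const_ge_1:
  assumes "\<forall>i\<le>m. tau i \<ge> 0"
  shows "charF_lipschitz_const m A tau r \<ge> 1"
  unfolding charF_lipschitz_const_def using assms
  by (auto intro!: sum_nonneg mult_nonneg_nonneg matrix_l1_norm_nonneg)

lemma charF_lipschitz_const_mono:
  assumes "\<forall>i\<le>m. tau i \<ge> 0" "r \<le> s"
  shows "charF_lipschitz_const m A tau r \<le> charF_lipschitz_const m A tau s"
  unfolding charF_lipschitz_const_def using assms
  by (auto intro!: add_left_mono sum_mono mult_right_mono mult_left_mono matrix_l1_norm_nonneg)

lemma sigma_max_inv_charF_ge:
  assumes taus: "\<forall>i\<le>m. tau i \<ge> 0" and root: "det (charF m A tau z) = 0" and "d > 0"
    and nonroot: "det (charF m A tau (z + complex_of_real d)) \<noteq> 0"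
  shows "1 \<le> sigma_max (matrix_inv (charF m A tau (z + complex_of_real d)))
               * (d * charF_lipschitz_const m A tau (- Re z))"
proof -
  let ?F = "charF m A tau (z + complex_of_real d)" and ?L = "charF_lipschitz_const m A tau (- Re z)"
  let ?c = "\<lambda>k. exp (- (z + complex_of_real d) * complex_of_real (tau k))
                 - exp (- z * complex_of_real (tau k))"
  obtain v where v: "v \<noteq> 0" "charF m A tau z *v v = 0"
    using det_eq_0_imp_kernel root by blast
  have "?F *v v = complex_of_real d *s v - (\<Sum>k\<le>m. ?c k *s (A k *v v))"
    using v(2) unfolding charF_mult_vec by (simp add: vec_eq_iff sum_subtractf algebra_simps)
  then have "norm (?F *v v) \<le> d * norm v + (\<Sum>k\<le>m. cmod (?c k) * matrix_l1_norm (A k)) * norm v"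
    using norm_triangle_ineq4[of "complex_of_real d *s v" "\<Sum>k\<le>m. ?c k *s (A k *v v)"]
      norm_delay_sum_le[where c="?c" and m=m and A=A and x=v] \<open>d > 0\<close>
    by (simp add: norm_vector_scalar_mult)
  also have "\<dots> \<le> d * norm v
      + (\<Sum>k\<le>m. tau k * exp (- Re z * tau k) * d * matrix_l1_norm (A k)) * norm v"
    using taus norm_exp_delay_shift_le[of _ d z] \<open>d > 0\<close>
    by (intro add_left_mono mult_right_mono sum_mono mult_right_mono matrix_l1_norm_nonneg) auto
  also have "\<dots> = d * ?L * norm v"
    by (simp add: charF_lipschitz_const_def algebra_simps sum_distrib_left sum_distrib_right)
  finally have Fv: "norm (?F *v v) \<le> d * ?L * norm v" .
  have "norm v = norm (matrix_inv ?F *v (?F *v v))"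
    using nonroot by (simp add: matrix_inv_mult_vec)
  also have "\<dots> \<le> sigma_max (matrix_inv ?F) * norm (?F *v v)"
    by (rule norm_matrix_vector_mult_le_sigma_max)
  also have "\<dots> \<le> sigma_max (matrix_inv ?F) * (d * ?L) * norm v"
    using mult_left_mono[OF Fv sigma_max_nonneg[of "matrix_inv ?F"]] by (simp add: mult_ac)
  finally show ?thesis
    using v(1) by simp
qed

lemma weightfun_ge:
  assumes "tau 0 = 0" "\<forall>i\<le>m. wt i > 0"
  shows "1 / wt 0 \<le> weightfun m tau wt z"
proof -
  have "1 / wt 0 = cmod (exp (- z * complex_of_real (tau 0))) / wt 0"
    using assms by simp
  also have "\<dots> \<le> weightfun m tau wt z"
    unfolding weightfun_def using assms(2)
    by (intro member_le_sum[where f="\<lambda>k. cmod (exp (- z * complex_of_real (tau k))) / wt k"])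
       (auto intro: divide_nonneg_pos less_imp_le)
  finally show ?thesis .
qed

lemma weightfun_le:
  assumes "\<forall>i\<le>m. tau i \<ge> 0" "\<forall>i\<le>m. wt i > 0" "Re z \<ge> 0"
  shows "weightfun m tau wt z \<le> (\<Sum>k\<le>m. 1 / wt k)"
  unfolding weightfun_def using assms norm_exp_delay_le_1
  by (intro sum_mono divide_right_mono) auto

section \<open>Existence of characteristic roots\<close>

lemma det_charF_holomorphic: "(\<lambda>z. det (charF m A tau z)) holomorphic_on UNIV"
  unfolding det_def charF_entry by (intro holomorphic_intros)

lemma norm_det_le_entry_bound:
  fixes M :: "'a::real_normed_field^'n^'n"
  assumes "\<And>i j. norm (M$i$j) \<le> B"
  shows "norm (det M) \<le> fact CARD('n) * B ^ CARD('n)"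
proof -
  have "norm (det M) \<le> (\<Sum>p\<in>{p. p permutes UNIV}. norm (of_int (sign p) * (\<Prod>i\<in>UNIV. M$i$p i)))"
    unfolding det_def by (rule norm_sum)
  also have "\<dots> \<le> (\<Sum>p\<in>{p. p permutes (UNIV::'n set)}. B ^ CARD('n))"
  proof (rule sum_mono)
    fix p :: "'n \<Rightarrow> 'n"
    have "norm (of_int (sign p) * (\<Prod>i\<in>UNIV. M$i$p i)) = (\<Prod>i\<in>UNIV. norm (M$i$p i))"
      by (simp add: norm_mult prod_norm sign_def)
    also have "\<dots> \<le> (\<Prod>i\<in>(UNIV::'n set). B)"
      by (intro prod_mono conjI norm_ge_zero assms)
    finally show "norm (of_int (sign p) * (\<Prod>i\<in>UNIV. M$i$p i)) \<le> B ^ CARD('n)"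
      by simp
  qed
  also have "\<dots> = fact CARD('n) * B ^ CARD('n)"
    by (simp add: card_permutations)
  finally show ?thesis .
qed

lemma norm_charF_entry_le:
  assumes "\<forall>i\<le>m. tau i \<ge> 0"
  shows "cmod (charF m A tau z $ i $ j)
    \<le> (1 + delay_coeff_norm m A) * exp ((1 + (\<Sum>k\<le>m. tau k)) * cmod z)"
proof -
  define T where "T = 1 + (\<Sum>k\<le>m. tau k)"
  define E where "E = exp (T * cmod z)"
  have tau_le_T: "tau k \<le> T" if "k \<le> m" for k
    using that assms member_le_sum[of k "{..m}" tau] unfolding T_def by fastforce
  have "T \<ge> 1"
    unfolding T_def using assms by (auto intro!: sum_nonneg)
  then have "cmod z \<le> T * cmod z"
    by (simp add: mult_le_cancel_right1)
  also have "\<dots> \<le> E"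
    unfolding E_def using exp_ge_add_one_self[of "T * cmod z"] by linarith
  finally have z_le_E: "cmod (of_bool (i = j) * z) \<le> E"
    by (simp add: norm_mult E_def)
  have exp_le_E: "cmod (exp (- z * complex_of_real (tau k))) \<le> E" if "k \<le> m" for k
  proof -
    have "- Re z * tau k \<le> cmod z * tau k"
      using that assms abs_Re_le_cmod[of z] by (intro mult_right_mono) auto
    also have "\<dots> \<le> T * cmod z"
      using mult_left_mono[OF tau_le_T[OF that] norm_ge_zero[of z]] by (simp add: mult.commute)
    finally show ?thesis
      unfolding E_def by simp
  qed
  have "cmod (\<Sum>k\<le>m. exp (- z * complex_of_real (tau k)) * A k $ i $ j)
      \<le> (\<Sum>k\<le>m. E * matrix_l1_norm (A k))"
  proof (intro order.trans[OF norm_sum] sum_mono)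
    fix k assume "k \<in> {..m}"
    then show "cmod (exp (- z * complex_of_real (tau k)) * A k $ i $ j) \<le> E * matrix_l1_norm (A k)"
      unfolding norm_mult using exp_le_E
      by (intro mult_mono norm_entry_le_matrix_l1_norm) (auto simp: E_def)
  qed
  also have "\<dots> = E * delay_coeff_norm m A"
    by (simp add: delay_coeff_norm_def sum_distrib_left)
  finally have delay_le: "cmod (\<Sum>k\<le>m. exp (- z * complex_of_real (tau k)) * A k $ i $ j)
      \<le> E * delay_coeff_norm m A" .
  have "cmod (charF m A tau z $ i $ j)
      \<le> cmod (of_bool (i = j) * z) + cmod (\<Sum>k\<le>m. exp (- z * complex_of_real (tau k)) * A k $ i $ j)"
    unfolding charF_entry by (rule norm_triangle_ineq4)
  also have "\<dots> \<le> E + E * delay_coeff_norm m A"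
    using z_le_E delay_le by (rule add_mono)
  finally show ?thesis
    unfolding E_def T_def by (simp add: algebra_simps)
qed

lemma charF_entry_div_tendsto:
  assumes "\<forall>i\<le>m. tau i \<ge> 0"
  shows "((\<lambda>x::real. charF m A tau (of_real x) $ i $ j / of_real x) \<longlongrightarrow> of_bool (i = j)) at_top"
proof -
  let ?B = "\<lambda>x::real. \<Sum>k\<le>m. exp (- of_real x * complex_of_real (tau k)) * A k $ i $ j"
  have "((\<lambda>x. ?B x / of_real x) \<longlongrightarrow> 0) at_top"
  proof (rule Lim_null_comparison)
    show "\<forall>\<^sub>F x in at_top. norm (?B x / of_real x) \<le> delay_coeff_norm m A / x"
      using eventually_gt_at_top[of 0]
    proof eventually_elim
      case (elim x)
      have "cmod (?B x) \<le> (\<Sum>k\<le>m. matrix_l1_norm (A k))"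
      proof (intro order.trans[OF norm_sum] sum_mono)
        fix k assume "k \<in> {..m}"
        then have exp_le_1: "cmod (exp (- of_real x * complex_of_real (tau k))) \<le> 1"
          using assms elim by (intro norm_exp_delay_le_1) auto
        then show "cmod (exp (- of_real x * complex_of_real (tau k)) * A k $ i $ j) \<le> matrix_l1_norm (A k)"
          using mult_mono[OF exp_le_1 norm_entry_le_matrix_l1_norm[of "A k" i j]] by (simp add: norm_mult)
      qed
      then show ?case
        using elim by (simp add: norm_divide delay_coeff_norm_def divide_right_mono)
    qed
    show "((\<lambda>x. delay_coeff_norm m A / x) \<longlongrightarrow> 0) at_top"
      by (intro tendsto_divide_0[OF tendsto_const] filterlim_at_top_imp_at_infinity filterlim_ident)
  qed
  then have "((\<lambda>x. of_bool (i = j) - ?B x / of_real x) \<longlongrightarrow> of_bool (i = j)) at_top"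
    by (auto intro: tendsto_eq_intros)
  moreover have "\<forall>\<^sub>F x in at_top. of_bool (i = j) - ?B x / of_real x
      = charF m A tau (of_real x) $ i $ j / of_real x"
    using eventually_gt_at_top[of 0] by eventually_elim (simp add: charF_entry diff_divide_distrib)
  ultimately show ?thesis
    by (rule Lim_transform_eventually)
qed

lemma tendsto_det:
  fixes f :: "'b \<Rightarrow> 'a::real_normed_field^'n^'n"
  assumes "\<And>i j. ((\<lambda>x. f x $ i $ j) \<longlongrightarrow> M $ i $ j) F"
  shows "((\<lambda>x. det (f x)) \<longlongrightarrow> det M) F"
  unfolding det_def by (intro tendsto_intros assms)

lemma det_charF_div_power_tendsto:
  fixes A :: "nat \<Rightarrow> complex^'n^'n"
  assumes "\<forall>i\<le>m. tau i \<ge> 0"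
  shows "((\<lambda>x::real. det (charF m A tau (of_real x)) / of_real x ^ CARD('n)) \<longlongrightarrow> 1) at_top"
proof -
  let ?G = "\<lambda>x::real. \<chi> i j. charF m A tau (of_real x) $ i $ j / of_real x"
  have "det (?G x) = det (charF m A tau (of_real x)) / of_real x ^ CARD('n)" for x
    using det_rows_mul[of "\<lambda>_. inverse (of_real x)" "\<lambda>i. charF m A tau (of_real x) $ i"]
    by (simp add: vector_scalar_mult_def divide_inverse mult.commute power_inverse)
  moreover have "((\<lambda>x. det (?G x)) \<longlongrightarrow> det (mat 1 :: complex^'n^'n)) at_top"
  proof (rule tendsto_det)
    fix i j
    show "((\<lambda>x. ?G x $ i $ j) \<longlongrightarrow> mat 1 $ i $ j) at_top"
      using charF_entry_div_tendsto[OF assms, of A i j] by (cases "i = j") (simp_all add: mat_def)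
  qed
  ultimately show ?thesis
    by simp
qed

lemma norm_lt_norm_reflect_half_plane:
  fixes X :: complex
  assumes "Re X < M" "M > 0"
  shows "cmod X < cmod (complex_of_real (2 * M) - X)"
proof -
  have "(cmod X)\<^sup>2 = Re X ^ 2 + Im X ^ 2"
    by (simp add: cmod_power2)
  also have "\<dots> < (2 * M - Re X)\<^sup>2 + Im X ^ 2"
    using assms by (simp add: power2_eq_square algebra_simps)
  also have "\<dots> = (cmod (complex_of_real (2 * M) - X))\<^sup>2"
    by (simp add: cmod_power2)
  finally show ?thesis
    by (rule power_less_imp_less_base) simp
qed

lemma norm_le_if_norm_div_reflect_le_half:
  fixes X :: complex
  assumes "M \<ge> 0" and le_half: "cmod (X / (complex_of_real (2 * M) - X)) \<le> 1 / 2"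
  shows "cmod X \<le> 2 * M"
proof (cases "X = complex_of_real (2 * M)")
  case False
  then have "cmod X \<le> cmod (complex_of_real (2 * M) - X) / 2"
    using le_half by (simp add: norm_divide divide_le_eq)
  also have "\<dots> \<le> (2 * M + cmod X) / 2"
    using norm_triangle_ineq4[of "complex_of_real (2 * M)" X] \<open>M \<ge> 0\<close> by simp
  finally show ?thesis
    by simp
qed (use \<open>M \<ge> 0\<close> in simp)

(* The Moebius map X \<mapsto> X / (2 M - X) sends the half-plane Re X < M into the unit disc,
  so Schwarz's lemma applies. *)

lemma Borel_Caratheodory_half_radius:
  assumes holo: "h holomorphic_on ball 0 R" and "M > 0"
    and Re_lt: "\<And>w. cmod w < R \<Longrightarrow> Re (h w - h 0) < M"
    and z: "cmod z \<le> R / 2"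
  shows "cmod (h z - h 0) \<le> 2 * M"
proof (cases "z = 0")
  case False
  then have "R > 0"
    using z zero_less_norm_iff[of z] by linarith
  define X where "X = (\<lambda>w. h (complex_of_real R * w) - h 0)"
  have "Re (X w) < M" if "cmod w < 1" for w
    unfolding X_def using Re_lt \<open>R > 0\<close> that by (simp add: norm_mult)
  then have X_lt: "cmod (X w) < cmod (complex_of_real (2 * M) - X w)" if "cmod w < 1" for w
    using norm_lt_norm_reflect_half_plane \<open>M > 0\<close> that by blast
  then have den_nz: "complex_of_real (2 * M) - X w \<noteq> 0" if "cmod w < 1" for w
    using that by fastforce
  define \<psi> where "\<psi> = (\<lambda>w. X w / (complex_of_real (2 * M) - X w))"
  have "X holomorphic_on ball 0 1"
  proof -
    have "(\<lambda>w. complex_of_real R * w) ` ball 0 1 \<subseteq> ball 0 R"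
      using \<open>R > 0\<close> by (auto simp: norm_mult)
    then show ?thesis
      unfolding X_def
      by (intro holomorphic_intros holomorphic_on_compose_gen[OF _ holo, unfolded o_def]) auto
  qed
  then have "\<psi> holomorphic_on ball 0 1"
    unfolding \<psi>_def using den_nz by (intro holomorphic_intros) auto
  moreover have "\<psi> 0 = 0"
    by (simp add: \<psi>_def X_def)
  moreover have "cmod (\<psi> w) < 1" if "cmod w < 1" for w
    unfolding \<psi>_def using X_lt[OF that] den_nz[OF that] by (simp add: norm_divide divide_less_eq)
  moreover define w0 where "w0 = z / complex_of_real R"
  moreover have w0: "cmod w0 \<le> 1 / 2"
    using z \<open>R > 0\<close> by (simp add: w0_def norm_divide divide_le_eq)
  ultimately have \<psi>_w0: "cmod (\<psi> w0) \<le> 1 / 2"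
    using Schwarz_Lemma(1)[of \<psi> w0] by fastforce
  have "X w0 = h z - h 0"
    unfolding X_def w0_def using \<open>R > 0\<close> by simp
  with \<psi>_w0 show ?thesis
    unfolding \<psi>_def using norm_le_if_norm_div_reflect_le_half[of M "X w0"] \<open>M > 0\<close> by simp
qed (use \<open>M > 0\<close> in simp)

lemma entire_affine_if_Re_le_linear:
  assumes holo: "h holomorphic_on UNIV" and Re_le: "\<And>z. Re (h z) \<le> C * cmod z + C"
  shows "h z = h 0 + deriv h 0 * z"
proof -
  define K where "K = 6 * \<bar>C\<bar> + 3 * cmod (h 0) + 2"
  have "cmod (h w) \<le> K * cmod w ^ 1" if w: "1 \<le> cmod w" for w
  proof -
    define M where "M = \<bar>C\<bar> * (2 * cmod w) + \<bar>C\<bar> + cmod (h 0) + 1"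
    have "M > 0"
      unfolding M_def by (intro add_nonneg_pos add_nonneg_nonneg mult_nonneg_nonneg) auto
    have "Re (h u - h 0) < M" if "cmod u < 2 * cmod w" for u
    proof -
      have "Re (h u - h 0) \<le> \<bar>C\<bar> * cmod u + \<bar>C\<bar> + cmod (h 0)"
        using Re_le[of u] abs_Re_le_cmod[of "h 0"] abs_ge_self[of C]
          mult_right_mono[of C "\<bar>C\<bar>" "cmod u"] by simp
      also have "\<bar>C\<bar> * cmod u \<le> \<bar>C\<bar> * (2 * cmod w)"
        using that by (intro mult_left_mono) auto
      finally show ?thesis
        unfolding M_def by linarith
    qed
    then have "cmod (h w - h 0) \<le> 2 * M"
      using w by (intro Borel_Caratheodory_half_radius[where R="2 * cmod w"]
          holomorphic_on_subset[OF holo] \<open>M > 0\<close>) auto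
    then have "cmod (h w) \<le> 2 * M + cmod (h 0)"
      using norm_triangle_ineq2[of "h w" "h 0"] by linarith
    also have "\<dots> \<le> K * cmod w"
    proof -
      have "\<bar>C\<bar> \<le> \<bar>C\<bar> * cmod w" "cmod (h 0) \<le> cmod (h 0) * cmod w"
        using w by (simp_all add: mult_le_cancel_left1)
      then show ?thesis
        using w unfolding M_def K_def by (simp add: algebra_simps)
    qed
    finally show ?thesis by simp
  qed
  from Liouville_polynomial[OF holo this, where \<xi>=z] show ?thesis
    by (simp add: numeral_2_eq_2)
qed

lemma entire_nonvanishing_exponential_type_eq_exp_affine:
  assumes holo: "g holomorphic_on UNIV" and nz: "\<And>z. g z \<noteq> 0"
    and growth: "\<And>z. cmod (g z) \<le> D * exp (T * cmod z)"
  obtains a b where "\<And>z. g z = exp (a * z + b)"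
proof -
  obtain h where h: "h holomorphic_on UNIV" "\<And>z. exp (h z) = g z"
    using holomorphic_logarithm_exists[of UNIV g 0] holo nz by auto
  have "0 < cmod (g 0)"
    using nz by simp
  moreover have "cmod (g 0) \<le> D"
    using growth[of 0] by simp
  ultimately have "D > 0"
    by linarith
  have "Re (h z) \<le> (\<bar>T\<bar> + \<bar>ln D\<bar>) * cmod z + (\<bar>T\<bar> + \<bar>ln D\<bar>)" for z
  proof -
    have "exp (Re (h z)) = cmod (g z)"
      by (metis h(2) norm_exp_eq_Re)
    also have "\<dots> \<le> exp (ln D + T * cmod z)"
      using growth[of z] \<open>D > 0\<close> by (simp add: exp_add)
    finally have "exp (Re (h z)) \<le> exp (ln D + T * cmod z)" .
    then have "Re (h z) \<le> ln D + T * cmod z"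
      by simp
    moreover have "T * cmod z \<le> \<bar>T\<bar> * cmod z"
      by (intro mult_right_mono) auto
    moreover have "0 \<le> \<bar>ln D\<bar> * cmod z"
      by simp
    ultimately show ?thesis
      using abs_ge_self[of "ln D"] abs_ge_zero[of T] unfolding distrib_right by linarith
  qed
  then have "h z = h 0 + deriv h 0 * z" for z
    by (rule entire_affine_if_Re_le_linear[OF h(1)])
  with h(2) show ?thesis
    by (intro that[of "deriv h 0" "h 0"]) (metis add.commute)
qed

lemma exp_affine_div_power_tendsto_1_imp_0:
  fixes a b :: complex
  assumes "((\<lambda>x::real. exp (a * of_real x + b) / of_real x ^ n) \<longlongrightarrow> 1) at_top"
  shows "n = 0"
proof -
  let ?q = "\<lambda>x::real. exp (a * of_real x + b) / of_real x ^ n"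
  have lim2: "filterlim (\<lambda>x::real. 2 * x) at_top at_top"
    by real_asymp
  (* comparing q(2x) with q(x) isolates exp(a x), whose square must then have the same limit *)
  have "((\<lambda>x. ?q (2 * x) / ?q x * 2 ^ n) \<longlongrightarrow> 1 / 1 * 2 ^ n) at_top"
    by (intro tendsto_intros filterlim_compose[OF assms lim2] assms) simp
  moreover have "\<forall>\<^sub>F x in at_top. ?q (2 * x) / ?q x * 2 ^ n = exp (a * of_real x)"
    using eventually_gt_at_top[of 0]
  proof eventually_elim
    case (elim x)
    have "exp (a * of_real (2 * x) + b) = exp (a * of_real x) * exp (a * of_real x + b)"
      by (simp add: algebra_simps flip: exp_add)
    then show ?case
      using elim by (simp add: field_simps power_mult_distrib)
  qed
  ultimately have exp_lim: "((\<lambda>x. exp (a * of_real x)) \<longlongrightarrow> 2 ^ n) at_top"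
    by (simp add: Lim_transform_eventually)
  have square_lim: "((\<lambda>x. exp (a * of_real x) ^ 2) \<longlongrightarrow> (2 ^ n) ^ 2) at_top"
    by (intro tendsto_intros exp_lim)
  have dilated_lim: "((\<lambda>x. exp (a * of_real x) ^ 2) \<longlongrightarrow> 2 ^ n) at_top"
    using filterlim_compose[OF exp_lim lim2]
    by (simp add: power2_eq_square mult_ac flip: exp_add)
  have "((2::complex) ^ n) ^ 2 = 2 ^ n"
    by (rule tendsto_unique[OF _ square_lim dilated_lim]) simp
  then have "(2::complex) ^ n = 1"
    by (simp add: power2_eq_square)
  then have "(2::real) ^ n = 1"
    by (metis norm_numeral norm_one norm_power)
  then show ?thesis
    using one_less_power[of "2::real" n] by (cases n) auto
qed

lemma charF_has_root:
  fixes A :: "nat \<Rightarrow> complex^'n^'n"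
  assumes taus: "\<forall>i\<le>m. tau i \<ge> 0"
  shows "\<exists>z. det (charF m A tau z) = 0"
proof (rule ccontr)
  assume "\<nexists>z. det (charF m A tau z) = 0"
  moreover have "cmod (det (charF m A tau z))
      \<le> fact CARD('n) * (1 + delay_coeff_norm m A) ^ CARD('n)
        * exp (CARD('n) * (1 + (\<Sum>k\<le>m. tau k)) * cmod z)" for z
    using norm_det_le_entry_bound[OF norm_charF_entry_le[OF taus]]
    by (simp add: power_mult_distrib mult.assoc flip: exp_of_nat_mult)
  ultimately obtain a b where "\<And>z. det (charF m A tau z) = exp (a * z + b)"
    using entire_nonvanishing_exponential_type_eq_exp_affine[OF det_charF_holomorphic] by blast
  then have "CARD('n) = 0"
    using det_charF_div_power_tendsto[OF taus, of A]
    by (intro exp_affine_div_power_tendsto_1_imp_0[where a=a and b=b]) simp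
  then show False
    by simp
qed

section \<open>Behaviour of alpha_f\<close>

lemma Re_root_le_spectral_abscissa:
  assumes "\<forall>i\<le>m. tau i \<ge> 0" "det (charF m A tau z) = 0"
  shows "Re z \<le> spectral_abscissa m A tau"
  unfolding spectral_abscissa_def using assms Re_root_le_delay_coeff_norm[OF assms(1)]
  by (intro cSup_upper) (auto intro!: bdd_aboveI[where M="delay_coeff_norm m A"])

lemma root_near_spectral_abscissa:
  fixes A :: "nat \<Rightarrow> complex^'n^'n"
  assumes "\<forall>i\<le>m. tau i \<ge> 0" "e > 0"
  obtains z where "det (charF m A tau z) = 0" "spectral_abscissa m A tau - e < Re z"
proof -
  have "Re ` {z. det (charF m A tau z) = 0} \<noteq> {}"
    using charF_has_root[OF assms(1)] by auto
  moreover have "spectral_abscissa m A tau - e < Sup (Re ` {z. det (charF m A tau z) = 0})"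
    using assms(2) by (simp add: spectral_abscissa_def)
  ultimately show ?thesis
    using that less_cSupE by blast
qed

lemma weightfun_nonneg:
  assumes "\<forall>i\<le>m. wt i > 0"
  shows "weightfun m tau wt z \<ge> 0"
  unfolding weightfun_def using assms by (auto intro!: sum_nonneg divide_nonneg_pos)

lemma alpha_f_nonneg:
  assumes "\<forall>i\<le>m. wt i > 0"
  shows "alpha_f m A tau wt s \<ge> 0"
proof -
  have "0 \<le> ffun m A tau wt (Complex s 0)"
    unfolding ffun_def by (intro mult_nonneg_nonneg weightfun_nonneg[OF assms] sigma_max_nonneg)
  then have "(0::ereal) \<le> ereal (ffun m A tau wt (Complex s 0))"
    by simp
  also have "\<dots> \<le> alpha_f m A tau wt s"
    unfolding alpha_f_def by (rule SUP_upper) simp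
  finally show ?thesis .
qed

lemma alpha_f_le:
  assumes "\<forall>i\<le>m. tau i \<ge> 0" "\<forall>i\<le>m. wt i > 0" "s > delay_coeff_norm m A"
  shows "alpha_f m A tau wt s \<le> ereal ((\<Sum>k\<le>m. 1 / wt k) / (s - delay_coeff_norm m A))"
  unfolding alpha_f_def
proof (rule SUP_least)
  fix \<omega> :: real
  have "Re (Complex s \<omega>) \<ge> 0"
    using assms(3) delay_coeff_norm_nonneg[of m A] by simp
  then have "ffun m A tau wt (Complex s \<omega>) \<le> (\<Sum>k\<le>m. 1 / wt k) * (1 / (s - delay_coeff_norm m A))"
    unfolding ffun_def
    using weightfun_le[OF assms(1,2)] sigma_max_inv_charF_le[OF assms(1), where A=A and z="Complex s \<omega>"]
      assms weightfun_nonneg[OF assms(2)] sigma_max_nonneg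
    by (intro mult_mono) (auto intro!: sum_nonneg)
  then show "ereal (ffun m A tau wt (Complex s \<omega>))
      \<le> ereal ((\<Sum>k\<le>m. 1 / wt k) / (s - delay_coeff_norm m A))"
    by simp
qed

lemma sigma_max_inv_charF_ge_near_spectral_abscissa:
  fixes A :: "nat \<Rightarrow> complex^'n^'n" and m :: nat and tau :: "nat \<Rightarrow> real"
  defines "a0 \<equiv> spectral_abscissa m A tau"
  defines "L \<equiv> charF_lipschitz_const m A tau (1 - a0)"
  assumes taus: "\<forall>i\<le>m. tau i \<ge> 0" and "s > a0"
  obtains \<omega> where "1 / (2 * (s - a0) * L) \<le> sigma_max (matrix_inv (charF m A tau (Complex s \<omega>)))"
proof -
  obtain z where root: "det (charF m A tau z) = 0" and near: "a0 - min 1 (s - a0) < Re z"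
    using root_near_spectral_abscissa[OF taus, of "min 1 (s - a0)"] \<open>s > a0\<close>
    unfolding a0_def by auto
  have "Re z \<le> a0"
    unfolding a0_def using Re_root_le_spectral_abscissa[OF taus root] .
  define d where "d = s - Re z"
  have d: "0 < d" "d \<le> 2 * (s - a0)"
    using \<open>Re z \<le> a0\<close> near \<open>s > a0\<close> by (auto simp: d_def)
  have shift: "z + complex_of_real d = Complex s (Im z)"
    by (simp add: complex_eq_iff d_def)
  let ?\<sigma> = "sigma_max (matrix_inv (charF m A tau (Complex s (Im z))))"
  have "det (charF m A tau (z + complex_of_real d)) \<noteq> 0"
    using Re_root_le_spectral_abscissa[OF taus] \<open>s > a0\<close> unfolding shift a0_def by force
  from sigma_max_inv_charF_ge[OF taus root \<open>d > 0\<close> this]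
  have "1 \<le> ?\<sigma> * (d * charF_lipschitz_const m A tau (- Re z))"
    unfolding shift .
  also have "\<dots> \<le> ?\<sigma> * (2 * (s - a0) * L)"
    unfolding L_def using d near charF_lipschitz_const_ge_1[OF taus, of A "- Re z"]
    by (intro mult_left_mono mult_mono charF_lipschitz_const_mono[OF taus] sigma_max_nonneg) auto
  finally have "1 \<le> ?\<sigma> * (2 * (s - a0) * L)" .
  moreover have "0 < 2 * (s - a0) * L"
    unfolding L_def using \<open>s > a0\<close> charF_lipschitz_const_ge_1[OF taus, of A "1 - a0"] by simp
  ultimately show ?thesis
    by (intro that[of "Im z"]) (simp add: divide_le_eq)
qed

lemma alpha_f_ge:
  fixes A :: "nat \<Rightarrow> complex^'n^'n" and m :: nat and tau :: "nat \<Rightarrow> real"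
  defines "a0 \<equiv> spectral_abscissa m A tau"
  defines "L \<equiv> charF_lipschitz_const m A tau (1 - a0)"
  assumes tau0: "tau 0 = 0" and taus: "\<forall>i\<le>m. tau i \<ge> 0" and wts: "\<forall>i\<le>m. wt i > 0"
    and "s > a0"
  shows "ereal (1 / (2 * wt 0 * L * (s - a0))) \<le> alpha_f m A tau wt s"
proof -
  obtain \<omega> where
    \<sigma>_ge: "1 / (2 * (s - a0) * L) \<le> sigma_max (matrix_inv (charF m A tau (Complex s \<omega>)))"
    using sigma_max_inv_charF_ge_near_spectral_abscissa[OF taus \<open>s > a0\<close>[unfolded a0_def]]
    unfolding a0_def L_def by blast
  have "0 < 2 * (s - a0) * L"
    unfolding L_def using \<open>s > a0\<close> charF_lipschitz_const_ge_1[OF taus, of A "1 - a0"] by simp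
  then have "1 / wt 0 * (1 / (2 * (s - a0) * L)) \<le> ffun m A tau wt (Complex s \<omega>)"
    unfolding ffun_def
    using weightfun_ge[where m=m and tau=tau and wt=wt, OF tau0 wts] weightfun_nonneg[OF wts] \<sigma>_ge
    by (intro mult_mono) auto
  then have "ereal (1 / (2 * wt 0 * L * (s - a0))) \<le> ereal (ffun m A tau wt (Complex s \<omega>))"
    by (simp add: mult_ac)
  also have "\<dots> \<le> alpha_f m A tau wt s"
    unfolding alpha_f_def by (rule SUP_upper) simp
  finally show ?thesis .
qed

lemma alpha_f_tendsto_0:
  assumes "\<forall>i\<le>m. tau i \<ge> 0" "\<forall>i\<le>m. wt i > 0"
  shows "(alpha_f m A tau wt \<longlongrightarrow> 0) at_top"
proof (rule tendsto_sandwich)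
  let ?S = "delay_coeff_norm m A" and ?W = "\<Sum>k\<le>m. 1 / wt k"
  show "\<forall>\<^sub>F s in at_top. 0 \<le> alpha_f m A tau wt s"
    by (intro always_eventually allI alpha_f_nonneg[OF assms(2)])
  show "\<forall>\<^sub>F s in at_top. alpha_f m A tau wt s \<le> ereal (?W / (s - ?S))"
    using eventually_gt_at_top[of ?S] by eventually_elim (rule alpha_f_le[OF assms])
  have "filterlim (\<lambda>s. s - ?S) at_infinity at_top"
    by (intro filterlim_at_top_imp_at_infinity filterlim_tendsto_add_at_top[OF tendsto_const filterlim_ident,
        of "- ?S", simplified])
  then have "((\<lambda>s. ?W / (s - ?S)) \<longlongrightarrow> 0) at_top"
    by (rule tendsto_divide_0[OF tendsto_const])
  then show "((\<lambda>s. ereal (?W / (s - ?S))) \<longlongrightarrow> 0) at_top"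
    by (simp add: zero_ereal_def tendsto_ereal)
qed simp

lemma alpha_f_tendsto_infinity:
  fixes A :: "nat \<Rightarrow> complex^'n^'n"
  assumes "tau 0 = 0" "\<forall>i\<le>m. tau i \<ge> 0" "\<forall>i\<le>m. wt i > 0"
  shows "(alpha_f m A tau wt \<longlongrightarrow> \<infinity>) (at_right (spectral_abscissa m A tau))"
proof -
  define a0 where "a0 = spectral_abscissa m A tau"
  define c where "c = 1 / (2 * wt 0 * charF_lipschitz_const m A tau (1 - a0))"
  have "c > 0"
    unfolding c_def using assms(3) charF_lipschitz_const_ge_1[OF assms(2), of A "1 - a0"] by simp
  have "filterlim (\<lambda>x. c * inverse x) at_top (at_right (0::real))"
    by (rule filterlim_tendsto_pos_mult_at_top[OF tendsto_const \<open>c > 0\<close> filterlim_inverse_at_top_right])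
  then have "filterlim (\<lambda>s. c / (s - a0)) at_top (at_right a0)"
    by (subst filterlim_at_right_to_0) (simp add: divide_inverse)
  then have lower_lim: "((\<lambda>s. ereal (c / (s - a0))) \<longlongrightarrow> \<infinity>) (at_right a0)"
    by (simp add: tendsto_PInfty_eq_at_top)
  have lower: "ereal (c / (s - a0)) \<le> alpha_f m A tau wt s" if "s > a0" for s
    using alpha_f_ge[OF assms that[unfolded a0_def]] by (simp add: a0_def c_def mult_ac)
  show ?thesis
    unfolding a0_def[symmetric] tendsto_PInfty
  proof
    fix r
    have "\<forall>\<^sub>F s in at_right a0. ereal r < ereal (c / (s - a0))"
      using lower_lim by (simp add: tendsto_PInfty)
    with eventually_at_right_less[of a0]
    show "\<forall>\<^sub>F s in at_right a0. ereal r < alpha_f m A tau wt s"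
      by eventually_elim (use lower in \<open>blast intro: less_le_trans\<close>)
  qed
qed

theorem proposition2:
  fixes m :: nat and A :: "nat \<Rightarrow> complex^'n^'n" and tau wt :: "nat \<Rightarrow> real"
  assumes "tau 0 = 0"
    and "\<forall>i\<le>m. tau i \<ge> 0"
    and "\<forall>i\<le>m. wt i > 0"
  shows "(alpha_f m A tau wt \<longlongrightarrow> \<infinity>) (at_right (spectral_abscissa m A tau))
       \<and> (alpha_f m A tau wt \<longlongrightarrow> 0) at_top"
  using alpha_f_tendsto_infinity[OF assms] alpha_f_tendsto_0[OF assms(2,3)] by blast

end
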